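(* Let $k\ge1$ be an integer. There is a non-zero constant $c\in\mathbb{Q}$ such that $$P_k(1,\beta,0)=c\cdot\prod_{i=1}^r\left(\beta-\frac{1}{(2i-1)^2}\right)^k\cdot\prod_{i=1}^{k-1}\left(\beta-\frac{1}{(2r+2i-1)^2}\right)^{k-i}$$ in $\mathbb{Q}[\beta]$.
   Context: Fix an integer $r\ge1$ and indeterminates $\alpha,\beta,\gamma$. Define polynomials $c_n=c_n(\alpha,\beta,\gamma)\in\mathbb{Q}[\alpha,\beta,\gamma]$ by $c_n=0$ for $n<0$, $c_0=1$, and for every integer $n\ge-3$, $$(n+4)c_{n+4}+(2n+6-r)\alpha c_{n+3}+\left[(n+2-r)\alpha^2+(2n+5-2r)\frac{\alpha^2-\beta}{4}\right]c_{n+2}+\left[(2n+3-3r)\alpha\frac{\alpha^2-\beta}{4}+\frac{\gamma}{2}\right]c_{n+1}+\frac{1}{16}(\alpha^2-\beta)^2(n+1-2r)c_n=0.$$ For $k\ge1$ define $P_k(\alpha,\beta,\gamma):=\det\big(c_{k+2r-1+j-i}\big)_{1\le i,j\le k}$; $P_k(1,\beta,0)$ is its specialization at $\alpha=1,\gamma=0$. *)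

theory Defs
  imports "HOL-Computational_Algebra.Polynomial" "Jordan_Normal_Form.Determinant"
begin

text \<open>The sequence c_n, evaluated at arbitrary values alpha = a, beta = b, gamma = g
  in the ring Q[beta] (univariate rational polynomials). Indices are integers;
  c_n = 0 for n < 0, c_0 = 1, and for n \<ge> 1 the recurrence (with m = n - 4 \<ge> -3)
  is solved for (m+4) c_(m+4).\<close>

function cseq :: "nat \<Rightarrow> rat poly \<Rightarrow> rat poly \<Rightarrow> rat poly \<Rightarrow> int \<Rightarrow> rat poly" where
  "cseq r a b g n =
    (if n < 0 then 0 else if n = 0 then 1 else
      (let m = n - 4; d = a^2 - b; R = int r in
        - smult (1 / of_int (m + 4))
          ( smult (of_int (2*m + 6 - R)) a * cseq r a b g (n - 1)
          + (smult (of_int (m + 2 - R)) (a^2) + smult (of_int (2*m + 5 - 2*R) / 4) d)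
              * cseq r a b g (n - 2)
          + (smult (of_int (2*m + 3 - 3*R) / 4) (a * d) + smult (1/2) g)
              * cseq r a b g (n - 3)
          + smult (of_int (m + 1 - 2*R) / 16) (d^2) * cseq r a b g (n - 4))))"
  by pat_completeness auto
termination
  by (relation "measure (\<lambda>(r, a, b, g, n). nat n)") auto

declare cseq.simps[simp del]

text \<open>P_k(alpha,beta,gamma) = det (c_(k+2r-1+j-i))_(1\<le>i,j\<le>k); 0-based indices
  here, which does not change j - i.\<close>

definition Pk :: "nat \<Rightarrow> nat \<Rightarrow> rat poly \<Rightarrow> rat poly \<Rightarrow> rat poly \<Rightarrow> rat poly" where
  "Pk r k a b g =
     det (mat k k (\<lambda>(i, j). cseq r a b g (int k + 2 * int r - 1 + int j - int i)))"

end

theory Submission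
  imports Defs "HOL-Computational_Algebra.Polynomial_FPS" "HOL-Computational_Algebra.Field_as_Ring"
begin

text \<open>
  At \<open>\<alpha> = 1\<close>, \<open>\<gamma> = 0\<close> and \<open>\<beta> = \<beta>\<^sub>j = 1/(2j-1)\<^sup>2\<close> the recurrence for \<open>c\<^sub>n\<close> is the coefficient
  form of a first-order linear ODE whose solution is the rational function
  \<open>F\<^sub>j(x) = (1 + a\<^sub>j x)\<^bsup>r-j\<^esup> (1 + b\<^sub>j x)\<^bsup>r+j-1\<^esup>\<close> with \<open>a\<^sub>j = (j-1)/(2j-1)\<close>, \<open>b\<^sub>j = j/(2j-1)\<close>.
  Since \<open>(1 + a\<^sub>j x)\<^bsup>j-r\<^esup> F\<^sub>j\<close> is a polynomial of degree \<open>< 2r + (j-r)\<close>, the coefficients of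
  \<open>F\<^sub>j\<close> of high index satisfy a linear relation of length \<open>j - r\<close>; column operations in the
  Toeplitz matrix defining \<open>P\<^sub>k\<close> then show \<open>(\<beta> - \<beta>\<^sub>j)\<^bsup>k - max 0 (j-r)\<^esup>\<close> divides \<open>P\<^sub>k\<close>
  for \<open>1 \<le> j < r + k\<close>. These factors have total degree \<open>k(k+2r-1)/2\<close>, which bounds
  \<open>deg P\<^sub>k\<close> because \<open>deg c\<^sub>n \<le> n/2\<close>. Finally \<open>P\<^sub>k(\<beta>\<^sub>r\<^sub>+\<^sub>k) \<noteq> 0\<close>: a kernel vector would give a
  polynomial \<open>W\<close> of degree \<open>< k\<close> such that \<open>W F\<^sub>r\<^sub>+\<^sub>k\<close> has \<open>k\<close> vanishing coefficients right after
  the degree of the numerator of \<open>F\<^sub>r\<^sub>+\<^sub>k = (1 + b x)\<^bsup>2r+k-1\<^esup> / (1 + a x)\<^bsup>k\<^esup>\<close>, which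
  coprimality of numerator and denominator rules out (uniqueness of Pade approximants).
\<close>

section \<open>Polynomials and determinants\<close>

lemma coprime_linear_poly:
  fixes a0 a1 b0 b1 :: "'a::field"
  assumes "a0 * b1 \<noteq> a1 * b0"
  shows "coprime [:a0, a1:] [:b0, b1:]"
proof (rule coprimeI)
  fix c assume "c dvd [:a0, a1:]" and "c dvd [:b0, b1:]"
  then have "c dvd smult b1 [:a0, a1:] - smult a1 [:b0, b1:]"
    by (intro dvd_diff dvd_smult)
  also have "smult b1 [:a0, a1:] - smult a1 [:b0, b1:] = [:a0 * b1 - a1 * b0:]"
    by (simp add: algebra_simps)
  finally show "is_unit c"
    using assms by (auto elim!: dvd_unit_imp_unit simp: is_unit_const_poly_iff dvd_field_iff)
qed

lemma prod_dvd_if_pairwise_coprime: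
  fixes f :: "'b \<Rightarrow> 'a::semiring_gcd"
  assumes "finite S" and "\<And>x. x \<in> S \<Longrightarrow> f x dvd a"
    and "\<And>x y. x \<in> S \<Longrightarrow> y \<in> S \<Longrightarrow> x \<noteq> y \<Longrightarrow> coprime (f x) (f y)"
  shows "prod f S dvd a"
  using assms
proof (induction S rule: finite_induct)
  case (insert x S)
  then have "coprime (f x) (prod f S)"
    by (intro prod_coprime_right) auto
  with insert show ?case
    by (simp add: divides_mult)
qed simp

lemma smult_eq_if_dvd_and_degree_le:
  fixes p q :: "'a::field poly"
  assumes "q dvd p" and "p \<noteq> 0" and "degree p \<le> degree q"
  shows "\<exists>c. c \<noteq> 0 \<and> p = smult c q"
proof -
  obtain s where p: "p = q * s" using assms(1) by (elim dvdE)
  with assms(2) have "q \<noteq> 0" "s \<noteq> 0" by auto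
  then have "degree s = 0" using assms(3) by (simp add: p degree_mult_eq)
  then have s: "s = [:coeff s 0:]" by (rule degree_0_id[symmetric])
  with \<open>s \<noteq> 0\<close> have "coeff s 0 \<noteq> 0" by auto
  moreover have "p = smult (coeff s 0) q" by (subst p, subst s) simp
  ultimately show ?thesis by blast
qed

lemma det_power_dvd_if_dvd_columns:
  fixes M :: "'a::comm_ring_1 mat"
  assumes M: "M \<in> carrier_mat k k"
    and dvd: "\<And>i b. i < k \<Longrightarrow> q \<le> b \<Longrightarrow> b < k \<Longrightarrow> p dvd M $$ (i, b)"
  shows "p ^ (k - q) dvd det M"
proof -
  define M' where "M' = mat k k (\<lambda>(i, b). if q \<le> b then SOME c. M $$ (i, b) = p * c else M $$ (i, b))"
  define D where "D = mat k k (\<lambda>(a, b). if a = b then if q \<le> b then p else 1 else 0)"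
  have M': "M' \<in> carrier_mat k k" and D: "D \<in> carrier_mat k k"
    by (simp_all add: M'_def D_def)
  have "M = M' * D"
  proof (rule eq_matI)
    fix i b assume "i < dim_row (M' * D)" "b < dim_col (M' * D)"
    then have ib: "i < k" "b < k" using M' D by auto
    have "(M' * D) $$ (i, b) = (\<Sum>a<k. M' $$ (i, a) * D $$ (a, b))"
      using ib M' D by (simp add: scalar_prod_def atLeast0LessThan)
    also have "\<dots> = M' $$ (i, b) * (if q \<le> b then p else 1)"
      using ib by (simp add: D_def if_distrib[of "\<lambda>x. _ * x"] sum.delta cong: if_cong)
    also have "\<dots> = M $$ (i, b)"
      using ib dvd[of i b] unfolding dvd_def by (auto simp: M'_def mult.commute intro: someI2_ex)
    finally show "M $$ (i, b) = (M' * D) $$ (i, b)" ..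
  qed (use M M' D in auto)
  moreover have "det D = p ^ (k - q)"
  proof -
    have diag: "{0..<k} \<inter> {b. q \<le> b} = {q..<k}" by auto
    have "det D = prod_list (diag_mat D)"
      by (rule det_upper_triangular[OF _ D]) (auto simp: upper_triangular_def D_def)
    also have "\<dots> = (\<Prod>b = 0..<k. if q \<le> b then p else 1)"
      using D by (simp add: prod_list_diag_prod D_def)
    also have "\<dots> = p ^ (k - q)"
      by (simp add: prod.If_cases diag)
    finally show ?thesis .
  qed
  ultimately show ?thesis
    using det_mult[OF M' D] by simp
qed

lemma det_power_dvd_if_column_combinations_dvd:
  fixes M :: "'a::comm_ring_1 mat"
  assumes M: "M \<in> carrier_mat k k" and e0: "e 0 = 1"
    and dvd: "\<And>i b. i < k \<Longrightarrow> q \<le> b \<Longrightarrow> b < k \<Longrightarrow> p dvd (\<Sum>t\<le>q. e t * M $$ (i, b - t))"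
  shows "p ^ (k - q) dvd det M"
proof -
  define T where "T = mat k k (\<lambda>(a, b).
    if q \<le> b then if a \<le> b \<and> b - a \<le> q then e (b - a) else 0 else if a = b then 1 else 0)"
  have T: "T \<in> carrier_mat k k" by (simp add: T_def)
  have "det T = prod_list (diag_mat T)"
    by (rule det_upper_triangular[OF _ T]) (auto simp: upper_triangular_def T_def)
  also have "\<dots> = 1"
    using T by (auto simp: prod_list_diag_prod T_def e0 intro!: prod.neutral)
  finally have "det M = det (M * T)"
    using det_mult[OF M T] by simp
  also have "p ^ (k - q) dvd det (M * T)"
  proof (rule det_power_dvd_if_dvd_columns)
    show "M * T \<in> carrier_mat k k" using M T by simp
  next
    fix i b assume ib: "i < k" "q \<le> b" "b < k"
    have "(M * T) $$ (i, b) = (\<Sum>a<k. M $$ (i, a) * T $$ (a, b))"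
      using ib M T by (simp add: scalar_prod_def atLeast0LessThan)
    also have "\<dots> = (\<Sum>a<k. if a \<in> {b - q..b} then M $$ (i, a) * e (b - a) else 0)"
      by (rule sum.cong) (use ib in \<open>auto simp: T_def\<close>)
    also have "\<dots> = (\<Sum>a\<in>{..<k} \<inter> {b - q..b}. M $$ (i, a) * e (b - a))"
      by (rule sum.inter_restrict[symmetric]) simp
    also have "{..<k} \<inter> {b - q..b} = {b - q..b}"
      using ib by auto
    also have "(\<Sum>a\<in>{b - q..b}. M $$ (i, a) * e (b - a)) = (\<Sum>t\<le>q. e t * M $$ (i, b - t))"
      by (rule sum.reindex_bij_witness[of _ "\<lambda>t. b - t" "\<lambda>a. b - a"]) (use ib in auto)
    finally show "p dvd (M * T) $$ (i, b)"
      using dvd[OF ib] by simp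
  qed
  finally show ?thesis .
qed

lemma twice_degree_det_le:
  fixes M :: "'a::comm_ring_1 poly mat"
  assumes M: "M \<in> carrier_mat k k"
    and deg: "\<And>i j. i < k \<Longrightarrow> j < k \<Longrightarrow> 2 * degree (M $$ (i, j)) + i \<le> K + j"
  shows "2 * degree (det M) \<le> k * K"
proof -
  have bound: "2 * degree (signof p * (\<Prod>i = 0..<k. M $$ (i, p i))) \<le> k * K"
    if p: "p permutes {0..<k}" for p :: "nat \<Rightarrow> nat"
  proof -
    have "degree (signof p * (\<Prod>i = 0..<k. M $$ (i, p i))) \<le> (\<Sum>i = 0..<k. degree (M $$ (i, p i)))"
      using degree_mult_le[of "signof p" "\<Prod>i = 0..<k. M $$ (i, p i)"]
        degree_prod_sum_le[of "{0..<k}" "\<lambda>i. M $$ (i, p i)"]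
      by (simp add: o_def)
    moreover have "2 * (\<Sum>i = 0..<k. degree (M $$ (i, p i))) + (\<Sum>i = 0..<k. i) \<le> (\<Sum>i = 0..<k. K + p i)"
      unfolding sum_distrib_left sum.distrib[symmetric]
      using p by (intro sum_mono deg) (auto simp: permutes_in_image)
    moreover have "(\<Sum>i = 0..<k. p i) = (\<Sum>i = 0..<k. i)"
      using sum.reindex_bij_betw[OF permutes_imp_bij[OF p], of "\<lambda>i. i"] by simp
    ultimately show ?thesis
      by (simp add: sum.distrib)
  qed
  have "degree (det M) \<le> k * K div 2"
    unfolding det_def'[OF M]
  proof (rule degree_sum_le)
    fix p assume "p \<in> {p. p permutes {0..<k}}"
    then show "degree (signof p * (\<Prod>i = 0..<k. M $$ (i, p i))) \<le> k * K div 2"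
      using bound[of p] by simp
  qed (simp add: finite_permutations)
  then show ?thesis by linarith
qed

lemma poly_det: "poly (det M) x = det (map_mat (\<lambda>p. poly p x) M)"
proof -
  interpret comm_ring_hom "\<lambda>p. poly p x" by unfold_locales auto
  show ?thesis by (rule hom_det[symmetric])
qed

lemma degree_linear_poly_power_le: "degree ([:a, b:] ^ n) \<le> n"
proof -
  have "degree [:a, b:] \<le> 1" by simp
  then show ?thesis
    using degree_power_le[of "[:a, b:]" n] mult_le_mono1[of "degree [:a, b:]" 1 n] by linarith
qed

section \<open>Formal power series\<close>

definition fps_nth_int :: "'a::zero fps \<Rightarrow> int \<Rightarrow> 'a" where
  "fps_nth_int f n = (if n < 0 then 0 else fps_nth f (nat n))"

lemma fps_nth_int_of_nat [simp]: "fps_nth_int f (int n) = fps_nth f n"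
  by (simp add: fps_nth_int_def)

lemma fps_nth_int_deriv:
  fixes f :: "'a::comm_ring_1 fps"
  shows "fps_nth_int (fps_deriv f) n = of_int (n + 1) * fps_nth_int f (n + 1)"
  by (cases "n = -1") (auto simp: fps_nth_int_def nat_add_distrib add.commute)

lemma fps_nth_poly_mult:
  fixes p :: "'a::comm_semiring_1 poly"
  assumes "degree p < m"
  shows "fps_nth (fps_of_poly p * f) n = (\<Sum>i<m. coeff p i * fps_nth_int f (int n - int i))"
proof -
  have "fps_nth (fps_of_poly p * f) n = (\<Sum>i\<le>n. coeff p i * fps_nth_int f (int n - int i))"
    by (auto simp: fps_mult_nth atLeast0AtMost fps_nth_int_def nat_diff_distrib intro!: sum.cong)
  also have "\<dots> = (\<Sum>i<n + m. coeff p i * fps_nth_int f (int n - int i))"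
    using assms by (intro sum.mono_neutral_left) (auto simp: fps_nth_int_def)
  also have "\<dots> = (\<Sum>i<m. coeff p i * fps_nth_int f (int n - int i))"
    using assms by (intro sum.mono_neutral_right) (auto simp: coeff_eq_0)
  finally show ?thesis .
qed

lemma fps_deriv_power_mult:
  fixes f :: "'a::comm_ring_1 fps"
  shows "f * fps_deriv (f ^ n) = of_nat n * fps_deriv f * f ^ n"
proof (cases n)
  case (Suc m)
  then show ?thesis
    unfolding fps_deriv_power' by (simp add: mult_ac)
qed simp

lemma fps_deriv_inverse_power_mult:
  fixes f :: "'a::field fps"
  assumes "fps_nth f 0 \<noteq> 0"
  shows "f * fps_deriv (inverse f ^ n) = - of_nat n * fps_deriv f * inverse f ^ n"
proof (cases n)
  case (Suc m)
  have "f * fps_deriv (inverse f ^ n) = - of_nat n * fps_deriv f * inverse f ^ n * (f * inverse f)"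
    unfolding fps_deriv_power' fps_inverse_deriv[OF assms] by (simp add: Suc power2_eq_square algebra_simps)
  with inverse_mult_eq_1'[OF assms] show ?thesis by simp
qed simp

lemma rational_fps_gap_imp_eq_0:
  fixes A B W :: "'a::field_gcd poly" and F :: "'a fps"
  assumes AF: "fps_of_poly A * F = fps_of_poly B" and B: "B \<noteq> 0" and cop: "coprime A B"
    and dA: "degree A \<le> k" and dW: "degree W < k"
    and gap: "\<And>n. degree B \<le> n \<Longrightarrow> n < degree B + k \<Longrightarrow> fps_nth (fps_of_poly W * F) n = 0"
  shows "W = 0"
proof -
  define m where "m = degree B"
  define L where "L = truncate_fps m (fps_of_poly W * F)"
  define R where "R = fps_of_poly W * F - fps_of_poly L"
  have R_low: "fps_nth R n = 0" if "n < m + k" for n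
    using gap[of n] that by (auto simp: R_def L_def m_def)
  have RA: "R * fps_of_poly A = fps_of_poly (W * B - L * A)"
    by (simp add: R_def fps_of_poly_diff fps_of_poly_mult AF[symmetric] algebra_simps)
  have deg_L: "degree (L * A) < m + k" if "L \<noteq> 0"
  proof -
    have "m \<noteq> 0" using that by (metis L_def truncate_0_fps)
    then have "degree L < m" by (simp add: L_def degree_truncate_fps)
    then show ?thesis using dA degree_mult_le[of L A] by linarith
  qed
  have "degree (W * B) < m + k"
    using dW degree_mult_le[of W B] by (cases "W = 0") (auto simp: m_def)
  then have deg: "degree (W * B - L * A) < m + k"
    using deg_L by (cases "L = 0") (auto intro: degree_diff_less)
  \<comment> \<open>\<open>R A\<close> is a polynomial of degree \<open>< m + k\<close> whose first \<open>m + k\<close> coefficients vanish.\<close>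
  have "R * fps_of_poly A = 0"
  proof (rule fps_ext)
    fix n
    show "fps_nth (R * fps_of_poly A) n = fps_nth 0 n"
    proof (cases "n < m + k")
      case True
      then show ?thesis by (simp add: fps_mult_nth R_low)
    next
      case False
      then have "coeff (W * B - L * A) n = 0"
        using deg by (intro coeff_eq_0) linarith
      then show ?thesis by (simp only: RA fps_of_poly_nth fps_zero_nth)
    qed
  qed
  moreover have "A \<noteq> 0" using AF B by auto
  ultimately have "R = 0" using fps_of_poly_eq_iff[of A 0] by simp
  then have LA: "L * A = W * B"
    using RA fps_of_poly_eq_iff[of "W * B - L * A" 0] by simp
  have "L = 0"
  proof (rule ccontr)
    assume "L \<noteq> 0"
    have "B dvd L * A" by (simp add: LA)
    with cop have "B dvd L" by (metis coprime_commute coprime_dvd_mult_left_iff)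
    then have "m \<le> degree L" using \<open>L \<noteq> 0\<close> by (simp add: m_def dvd_imp_degree_le)
    moreover have "m \<noteq> 0" using \<open>L \<noteq> 0\<close> by (metis L_def truncate_0_fps)
    then have "degree L < m" by (simp add: L_def degree_truncate_fps)
    ultimately show False by simp
  qed
  with LA B show "W = 0" by simp
qed

lemma det_toeplitz_rational_fps_nonzero:
  fixes A B :: "'a::field_gcd poly" and F :: "'a fps"
  assumes AF: "fps_of_poly A * F = fps_of_poly B" and B: "B \<noteq> 0" and cop: "coprime A B"
    and dA: "degree A \<le> k"
  shows "det (mat k k (\<lambda>(i, b). fps_nth_int F (int (degree B) + int b - int i))) \<noteq> 0"
    (is "det ?E \<noteq> 0")
proof
  assume "det ?E = 0"
  then obtain v where v: "v \<in> carrier_vec k" "v \<noteq> 0\<^sub>v k" "?E *\<^sub>v v = 0\<^sub>v k"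
    using det_0_iff_vec_prod_zero_field[of ?E k] by auto
  have "k \<noteq> 0"
  proof
    assume "k = 0"
    with v(1,2) show False by (auto intro!: eq_vecI)
  qed
  \<comment> \<open>With the entries of \<open>v\<close> reversed as coefficients, \<open>(E v)\<^sub>i\<close> is a coefficient of \<open>W F\<close>.\<close>
  define W where "W = (\<Sum>t<k. monom (v $ (k - 1 - t)) t)"
  have coeff_W: "coeff W t = (if t < k then v $ (k - 1 - t) else 0)" for t
    by (simp add: W_def coeff_sum)
  have dW: "degree W < k"
    using \<open>k \<noteq> 0\<close> by (intro degree_lessI) (auto simp: coeff_W)
  have "W = 0"
  proof (rule rational_fps_gap_imp_eq_0[OF AF B cop dA dW])
    fix n assume n: "degree B \<le> n" "n < degree B + k"
    define i where "i = degree B + k - 1 - n"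
    have i: "i < k" using n \<open>k \<noteq> 0\<close> by (simp add: i_def)
    have "fps_nth (fps_of_poly W * F) n = (\<Sum>t<k. coeff W t * fps_nth_int F (int n - int t))"
      by (rule fps_nth_poly_mult[OF dW])
    also have "\<dots> = (\<Sum>b<k. ?E $$ (i, b) * v $ b)"
      by (rule sum.reindex_bij_witness[of _ "\<lambda>b. k - 1 - b" "\<lambda>t. k - 1 - t"])
        (use i n in \<open>auto simp: coeff_W i_def of_nat_diff\<close>)
    also have "\<dots> = (?E *\<^sub>v v) $ i"
      using i v(1) by (simp add: scalar_prod_def atLeast0LessThan)
    also have "\<dots> = 0" using v(3) i by simp
    finally show "fps_nth (fps_of_poly W * F) n = 0" .
  qed
  then have "v $ b = 0" if "b < k" for b
    using coeff_W[of "k - 1 - b"] that by simp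
  then have "v = 0\<^sub>v k"
    using v(1) by (intro eq_vecI) auto
  with v(2) show False by simp
qed

section \<open>The generating series at \<open>\<beta>\<^sub>j\<close>\<close>

definition aj :: "nat \<Rightarrow> rat" where
  "aj j = of_nat (j - 1) / of_nat (2 * j - 1)"

definition bj :: "nat \<Rightarrow> rat" where
  "bj j = of_nat j / of_nat (2 * j - 1)"

definition beta_root :: "nat \<Rightarrow> rat" where
  "beta_root j = 1 / of_nat (2 * j - 1) ^ 2"

lemma aj_plus_bj: "j \<ge> 1 \<Longrightarrow> aj j + bj j = 1"
  by (simp add: aj_def bj_def of_nat_diff add_divide_distrib[symmetric])

lemma of_nat_mult_aj: "of_nat j * aj j = of_nat (j - 1) * bj j"
  by (simp add: aj_def bj_def)

lemma one_minus_beta_root: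
  assumes "j \<ge> 1"
  shows "1 - beta_root j = 4 * (aj j * bj j)"
proof -
  define t where "t = (of_nat (2 * j - 1) :: rat)"
  have "t \<noteq> 0" using assms by (simp add: t_def)
  then have "1 - beta_root j = (t ^ 2 - 1) / t ^ 2"
    by (simp add: beta_root_def t_def field_simps)
  also have "t ^ 2 - 1 = 4 * (of_nat (j - 1) * of_nat j)"
    using assms by (simp add: t_def of_nat_diff algebra_simps power2_eq_square)
  finally show ?thesis
    by (simp add: aj_def bj_def t_def power2_eq_square)
qed

lemma aj_neq_bj: "j \<ge> 1 \<Longrightarrow> aj j \<noteq> bj j"
  by (simp add: aj_def bj_def)

lemma bj_nonzero: "j \<ge> 1 \<Longrightarrow> bj j \<noteq> 0"
  by (simp add: bj_def)

lemma beta_root_inj: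
  assumes "x \<ge> 1" and "y \<ge> 1" and "beta_root x = beta_root y"
  shows "x = y"
proof -
  have "(of_nat (2 * x - 1) :: rat) ^ 2 = of_nat (2 * y - 1) ^ 2"
    using assms(3) by (simp add: beta_root_def)
  then have "(of_nat (2 * x - 1) :: rat) = of_nat (2 * y - 1)"
    by (rule power_eq_imp_eq_base) auto
  with assms(1,2) show ?thesis by simp
qed

text \<open>\<open>(1 + a\<^sub>j x)\<^bsup>r-j\<^esup> (1 + b\<^sub>j x)\<^bsup>r+j-1\<^esup>\<close>, written so that \<open>r - j\<close> may be negative.\<close>

definition gen_fps :: "nat \<Rightarrow> nat \<Rightarrow> rat fps" where
  "gen_fps r j =
     fps_of_poly ([:1, aj j:] ^ r * [:1, bj j:] ^ (r + j - 1)) * inverse (fps_of_poly [:1, aj j:]) ^ j"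

lemma gen_fps_ode:
  assumes "j \<ge> 1"
  shows "fps_of_poly [:1, 1, aj j * bj j:] * fps_deriv (gen_fps r j) =
         fps_of_poly [:of_nat r, (2 * of_nat r - 1) * (aj j * bj j):] * gen_fps r j"
proof -
  define a b s where "a = aj j" and "b = bj j" and "s = r + j - 1"
  define A B where "A = fps_of_poly [:1, a:]" and "B = fps_of_poly [:1, b:]"
  have A': "fps_deriv A = fps_const a" and B': "fps_deriv B = fps_const b"
    by (simp_all add: A_def B_def fps_of_poly_pderiv[symmetric] pderiv_pCons fps_of_poly_const)
  have A0: "fps_nth A 0 \<noteq> 0" by (simp add: A_def)
  have F: "gen_fps r j = A ^ r * B ^ s * inverse A ^ j"
    by (simp add: gen_fps_def A_def B_def a_def b_def s_def fps_of_poly_mult fps_of_poly_power)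
  \<comment> \<open>logarithmic differentiation of \<open>A\<^sup>r B\<^sup>s A\<^sup>-\<^sup>j\<close>\<close>
  have "A * B * fps_deriv (gen_fps r j)
      = B * (A * fps_deriv (A ^ r)) * B ^ s * inverse A ^ j + A * A ^ r * (B * fps_deriv (B ^ s)) * inverse A ^ j
        + B * A ^ r * B ^ s * (A * fps_deriv (inverse A ^ j))"
    by (simp add: F fps_deriv_mult algebra_simps)
  also have "\<dots> = (of_nat r * fps_const a * B + of_nat s * fps_const b * A - of_nat j * fps_const a * B)
      * gen_fps r j"
    by (simp add: F fps_deriv_power_mult fps_deriv_inverse_power_mult[OF A0] A' B' algebra_simps)
  also have "of_nat r * fps_const a * B + of_nat s * fps_const b * A - of_nat j * fps_const a * B
      = fps_of_poly [:of_nat r, (2 * of_nat r - 1) * (a * b):]"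
  proof -
    have "of_nat j * a = of_nat (j - 1) * b" and "a + b = 1"
      using assms by (simp_all add: a_def b_def of_nat_mult_aj aj_plus_bj)
    moreover from \<open>a + b = 1\<close> have "of_nat r * a + of_nat r * b = of_nat r"
      by (metis distrib_left mult_1_right)
    ultimately have "smult (of_nat r * a) [:1, b:] + smult (of_nat s * b) [:1, a:] - smult (of_nat j * a) [:1, b:]
        = [:of_nat r, (2 * of_nat r - 1) * (a * b):]"
      using assms by (simp add: s_def of_nat_diff algebra_simps)
    from arg_cong[OF this, of fps_of_poly] show ?thesis
      by (simp only: A_def B_def fps_of_poly_add fps_of_poly_diff fps_of_poly_smult
          fps_const_mult[symmetric] fps_of_nat)
  qed
  moreover have "A * B = fps_of_poly [:1, 1, a * b:]"
    using assms by (simp add: A_def B_def fps_of_poly_mult[symmetric] a_def b_def aj_plus_bj)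
  ultimately show ?thesis by (simp add: a_def b_def)
qed

lemma fps_nth_gen_fps_0 [simp]: "fps_nth (gen_fps r j) 0 = 1"
  by (simp add: gen_fps_def fps_power_zeroth coeff_mult_0 coeff_0_power)

text \<open>
  The ODE multiplied by \<open>1 + x + a\<^sub>j b\<^sub>j x\<^sup>2\<close>, read off at \<open>x\<^bsup>n-1\<^esup>\<close>: since \<open>1 - \<beta>\<^sub>j = 4 a\<^sub>j b\<^sub>j\<close>,
  this is the recurrence of \<open>c\<^sub>n\<close> at \<open>\<alpha> = 1\<close>, \<open>\<gamma> = 0\<close>, \<open>\<beta> = \<beta>\<^sub>j\<close>.
\<close>

lemma gen_fps_recurrence:
  fixes r j :: nat and n :: int
  assumes "j \<ge> 1" and "n \<ge> 1"
  defines "G \<equiv> fps_nth_int (gen_fps r j)" and "d \<equiv> aj j * bj j"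
  shows "of_int n * G n + 2 * of_int (n - 1) * G (n - 1) + (1 + 2 * d) * of_int (n - 2) * G (n - 2)
           + 2 * d * of_int (n - 3) * G (n - 3) + d ^ 2 * of_int (n - 4) * G (n - 4)
       = of_nat r * G (n - 1) + (of_nat r + (2 * of_nat r - 1) * d) * G (n - 2)
           + (3 * of_nat r - 1) * d * G (n - 3) + (2 * of_nat r - 1) * d ^ 2 * G (n - 4)"
proof -
  define Q L where "Q = [:1, 1, d:]" and "L = [:of_nat r, (2 * of_nat r - 1) * d:]"
  have "fps_of_poly (Q ^ 2) * fps_deriv (gen_fps r j) = fps_of_poly Q * (fps_of_poly Q * fps_deriv (gen_fps r j))"
    by (simp only: power2_eq_square fps_of_poly_mult mult.assoc)
  also have "\<dots> = fps_of_poly Q * (fps_of_poly L * gen_fps r j)"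
    by (simp only: Q_def L_def d_def gen_fps_ode[OF assms(1)])
  also have "\<dots> = fps_of_poly (Q * L) * gen_fps r j"
    by (simp only: fps_of_poly_mult mult.assoc)
  finally have "fps_nth (fps_of_poly (Q ^ 2) * fps_deriv (gen_fps r j)) (nat (n - 1))
      = fps_nth (fps_of_poly (Q * L) * gen_fps r j) (nat (n - 1))"
    by simp
  moreover have "degree (Q ^ 2) < 5" and "degree (Q * L) < 5"
    by (auto simp: Q_def L_def power2_eq_square degree_pCons_eq_if)
  ultimately have "(\<Sum>i<5. coeff (Q ^ 2) i * fps_nth_int (fps_deriv (gen_fps r j)) (n - 1 - int i))
      = (\<Sum>i<5. coeff (Q * L) i * G (n - 1 - int i))"
    using assms(2) by (simp add: fps_nth_poly_mult G_def)
  then show ?thesis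
    by (simp add: fps_nth_int_deriv Q_def L_def G_def numeral_eq_Suc power2_eq_square algebra_simps)
qed

lemma poly_cseq_beta_root:
  assumes "j \<ge> 1"
  shows "poly (cseq r 1 [:0, 1:] 0 n) (beta_root j) = fps_nth_int (gen_fps r j) n"
proof (induction "nat n" arbitrary: n rule: less_induct)
  case less
  show ?case
  proof (cases "n \<ge> 1")
    case False
    then consider "n < 0" | "n = 0" by linarith
    then show ?thesis
      by cases (simp_all add: cseq.simps fps_nth_int_def)
  next
    case True
    define G d where "G = fps_nth_int (gen_fps r j)" and "d = aj j * bj j"
    have IH: "poly (cseq r 1 [:0, 1:] 0 (n - 1)) (beta_root j) = G (n - 1)"
      "poly (cseq r 1 [:0, 1:] 0 (n - 2)) (beta_root j) = G (n - 2)"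
      "poly (cseq r 1 [:0, 1:] 0 (n - 3)) (beta_root j) = G (n - 3)"
      "poly (cseq r 1 [:0, 1:] 0 (n - 4)) (beta_root j) = G (n - 4)"
      using True less by (simp_all add: G_def)
    have one_minus: "1 - beta_root j = 4 * d"
      using one_minus_beta_root[OF assms] by (simp add: d_def)
    have "of_int n * G n = - (of_int (2 * (n - 4) + 6 - int r) * G (n - 1)
        + (of_int (n - 4 + 2 - int r) + of_int (2 * (n - 4) + 5 - 2 * int r) / 4 * (4 * d)) * G (n - 2)
        + of_int (2 * (n - 4) + 3 - 3 * int r) / 4 * (4 * d) * G (n - 3)
        + of_int (n - 4 + 1 - 2 * int r) / 16 * (4 * d) ^ 2 * G (n - 4))"
      using gen_fps_recurrence[OF assms True, of r] by (simp add: G_def d_def field_simps power2_eq_square)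
    moreover have "of_int n * poly (cseq r 1 [:0, 1:] 0 n) (beta_root j) =
        - (of_int (2 * (n - 4) + 6 - int r) * G (n - 1)
        + (of_int (n - 4 + 2 - int r) + of_int (2 * (n - 4) + 5 - 2 * int r) / 4 * (1 - beta_root j)) * G (n - 2)
        + of_int (2 * (n - 4) + 3 - 3 * int r) / 4 * (1 - beta_root j) * G (n - 3)
        + of_int (n - 4 + 1 - 2 * int r) / 16 * (1 - beta_root j) ^ 2 * G (n - 4))"
      using True by (subst cseq.simps) (simp add: Let_def IH)
    ultimately have "of_int n * poly (cseq r 1 [:0, 1:] 0 n) (beta_root j) = of_int n * G n"
      by (simp only: one_minus)
    with True show ?thesis by (simp add: G_def)
  qed
qed

lemma gen_fps_times_power:
  "fps_of_poly ([:1, aj j:] ^ (j - r)) * gen_fps r j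
     = fps_of_poly ([:1, aj j:] ^ (r - j) * [:1, bj j:] ^ (r + j - 1))"
proof -
  define A B where "A = fps_of_poly [:1, aj j:]" and "B = fps_of_poly ([:1, bj j:] ^ (r + j - 1))"
  have "A * inverse A = 1" by (rule inverse_mult_eq_1') (simp add: A_def)
  then have AI: "A ^ j * inverse A ^ j = 1" by (simp flip: power_mult_distrib)
  have e: "j - r + r = r - j + j" by simp
  have "fps_of_poly ([:1, aj j:] ^ (j - r)) * gen_fps r j = A ^ (j - r + r) * B * inverse A ^ j"
    by (simp add: gen_fps_def A_def B_def fps_of_poly_mult fps_of_poly_power power_add mult_ac)
  also have "\<dots> = A ^ (r - j) * B * (A ^ j * inverse A ^ j)"
    unfolding e by (simp add: power_add mult_ac)
  also have "\<dots> = fps_of_poly ([:1, aj j:] ^ (r - j) * [:1, bj j:] ^ (r + j - 1))"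
    by (simp only: AI mult_1_right) (simp add: A_def B_def fps_of_poly_mult fps_of_poly_power)
  finally show ?thesis .
qed

lemma gen_fps_linear_relation:
  assumes "j \<ge> 1" and "2 * r + (j - r) \<le> n"
  shows "(\<Sum>t\<le>j - r. coeff ([:1, aj j:] ^ (j - r)) t * fps_nth (gen_fps r j) (n - t)) = 0"
proof -
  let ?q = "j - r"
  have "degree ([:1, aj j:] ^ ?q) \<le> ?q"
    by (rule degree_linear_poly_power_le)
  then have "(\<Sum>t\<le>?q. coeff ([:1, aj j:] ^ ?q) t * fps_nth (gen_fps r j) (n - t))
      = (\<Sum>t\<le>n. coeff ([:1, aj j:] ^ ?q) t * fps_nth (gen_fps r j) (n - t))"
    using assms(2) by (intro sum.mono_neutral_left) (auto simp: coeff_eq_0)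
  also have "\<dots> = fps_nth (fps_of_poly ([:1, aj j:] ^ ?q) * gen_fps r j) n"
    by (simp add: fps_mult_nth atLeast0AtMost)
  also have "\<dots> = coeff ([:1, aj j:] ^ (r - j) * [:1, bj j:] ^ (r + j - 1)) n"
    by (simp only: gen_fps_times_power fps_of_poly_nth)
  also have "\<dots> = 0"
  proof (rule coeff_eq_0)
    have "degree ([:1, aj j:] ^ (r - j) * [:1, bj j:] ^ (r + j - 1)) \<le> (r - j) + (r + j - 1)"
      using degree_mult_le[of "[:1, aj j:] ^ (r - j)" "[:1, bj j:] ^ (r + j - 1)"]
        degree_linear_poly_power_le[of 1 "aj j" "r - j"] degree_linear_poly_power_le[of 1 "bj j" "r + j - 1"]
      by linarith
    also have "\<dots> < n" using assms by arith
    finally show "degree ([:1, aj j:] ^ (r - j) * [:1, bj j:] ^ (r + j - 1)) < n" .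
  qed
  finally show ?thesis .
qed

section \<open>The determinant \<open>P\<^sub>k(1, \<beta>, 0)\<close>\<close>

lemma degree_cseq_le: "2 * degree (cseq r 1 [:0, 1:] 0 n) \<le> nat n"
proof (induction "nat n" arbitrary: n rule: less_induct)
  case less
  show ?case
  proof (cases "n \<ge> 1")
    case False
    then show ?thesis by (subst cseq.simps) simp
  next
    case True
    have summand: "degree (f * cseq r 1 [:0, 1:] 0 (n - i)) \<le> nat n div 2"
      if "2 * degree f \<le> nat i" and "i \<in> {1, 2, 3, 4}" for f i
    proof (cases "n - i < 0")
      case True
      then show ?thesis by (subst cseq.simps) simp
    next
      case False
      have "2 * degree (cseq r 1 [:0, 1:] 0 (n - i)) \<le> nat (n - i)"
        using less True that(2) by auto
      moreover have "nat i + nat (n - i) = nat n"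
        using False that(2) by auto
      ultimately have "2 * degree (f * cseq r 1 [:0, 1:] 0 (n - i)) \<le> nat n"
        using degree_mult_le[of f "cseq r 1 [:0, 1:] 0 (n - i)"] that(1) by linarith
      then show ?thesis by (simp add: less_eq_div_iff_mult_less_eq mult.commute)
    qed
    \<comment> \<open>the coefficient of \<open>c\<^sub>n\<^sub>-\<^sub>i\<close> in the recurrence has degree at most \<open>i/2\<close> in \<open>\<beta>\<close>\<close>
    define D where "D = 1 ^ 2 - [:0, 1 :: rat:]"
    have "D = [:1, -1:]" by (simp add: D_def power2_eq_square one_pCons)
    then have D: "degree D \<le> 1" by simp
    define F1 F2 F3 F4 where
      "F1 = smult (of_int (2 * (n - 4) + 6 - int r)) (1 :: rat poly)"
      and "F2 = smult (of_int (n - 4 + 2 - int r)) (1 ^ 2) + smult (of_int (2 * (n - 4) + 5 - 2 * int r) / 4) D"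
      and "F3 = smult (of_int (2 * (n - 4) + 3 - 3 * int r) / 4) (1 * D) + smult (1 / 2) 0"
      and "F4 = smult (of_int (n - 4 + 1 - 2 * int r) / 16) (D ^ 2)"
    let ?S = "F1 * cseq r 1 [:0, 1:] 0 (n - 1) + F2 * cseq r 1 [:0, 1:] 0 (n - 2)
      + F3 * cseq r 1 [:0, 1:] 0 (n - 3) + F4 * cseq r 1 [:0, 1:] 0 (n - 4)"
    have "degree F1 = 0" by (simp add: F1_def)
    moreover have "degree F2 \<le> 1"
      unfolding F2_def using D by (intro degree_add_le order_trans[OF degree_smult_le]) auto
    moreover have "degree F3 \<le> 1"
      unfolding F3_def using D by (simp add: order_trans[OF degree_smult_le])
    moreover have "degree F4 \<le> 2"
      unfolding F4_def using D degree_power_le[of D 2] by (simp add: order_trans[OF degree_smult_le])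
    ultimately have "degree (F1 * cseq r 1 [:0, 1:] 0 (n - 1)) \<le> nat n div 2"
      "degree (F2 * cseq r 1 [:0, 1:] 0 (n - 2)) \<le> nat n div 2"
      "degree (F3 * cseq r 1 [:0, 1:] 0 (n - 3)) \<le> nat n div 2"
      "degree (F4 * cseq r 1 [:0, 1:] 0 (n - 4)) \<le> nat n div 2"
      by (simp_all add: summand)
    then have sum_bound: "degree ?S \<le> nat n div 2"
      by (intro degree_add_le)
    have "cseq r 1 [:0, 1:] 0 n = - smult (1 / of_int (n - 4 + 4)) ?S"
      using True by (subst cseq.simps) (simp add: Let_def F1_def F2_def F3_def F4_def D_def)
    then have "degree (cseq r 1 [:0, 1:] 0 n) \<le> nat n div 2"
      unfolding degree_minus using sum_bound by (simp add: order_trans[OF degree_smult_le])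
    then show ?thesis by (simp add: less_eq_div_iff_mult_less_eq mult.commute)
  qed
qed

definition cmat :: "nat \<Rightarrow> nat \<Rightarrow> rat poly mat" where
  "cmat r k = mat k k (\<lambda>(i, j). cseq r 1 [:0, 1:] 0 (int k + 2 * int r - 1 + int j - int i))"

lemma Pk_eq_det_cmat: "Pk r k 1 [:0, 1:] 0 = det (cmat r k)"
  by (simp add: Pk_def cmat_def)

lemma cmat_carrier: "cmat r k \<in> carrier_mat k k"
  by (simp add: cmat_def)

lemma degree_Pk_le: "2 * degree (Pk r k 1 [:0, 1:] 0) \<le> k * (k + 2 * r - 1)"
  unfolding Pk_eq_det_cmat
proof (rule twice_degree_det_le[OF cmat_carrier])
  fix i j assume ij: "i < k" "j < k"
  then have "nat (int k + 2 * int r - 1 + int j - int i) + i = k + 2 * r - 1 + j" by auto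
  then show "2 * degree (cmat r k $$ (i, j)) + i \<le> k + 2 * r - 1 + j"
    using ij degree_cseq_le[of r "int k + 2 * int r - 1 + int j - int i"] by (simp add: cmat_def)
qed

lemma linear_factor_power_dvd_Pk:
  assumes "j \<ge> 1"
  shows "[:-beta_root j, 1:] ^ (k - (j - r)) dvd Pk r k 1 [:0, 1:] 0"
proof -
  let ?q = "j - r"
  define e where "e t = [:coeff ([:1, aj j:] ^ ?q) t:]" for t
  have "e 0 = 1" by (simp add: e_def coeff_0_power one_pCons)
  show ?thesis unfolding Pk_eq_det_cmat
  proof (rule det_power_dvd_if_column_combinations_dvd[where e = e, OF cmat_carrier \<open>e 0 = 1\<close>])
    fix i b assume ib: "i < k" "?q \<le> b" "b < k"
    define n where "n = 2 * r + k - 1 + b - i"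
    have idx: "int k + 2 * int r - 1 + int (b - t) - int i = int (n - t)" if "t \<le> ?q" for t
      using that ib by (simp add: n_def of_nat_diff)
    have "poly (\<Sum>t\<le>?q. e t * cmat r k $$ (i, b - t)) (beta_root j)
        = (\<Sum>t\<le>?q. coeff ([:1, aj j:] ^ ?q) t * fps_nth (gen_fps r j) (n - t))"
      unfolding poly_sum
      by (rule sum.cong) (use ib idx in \<open>auto simp: e_def cmat_def poly_cseq_beta_root[OF assms]\<close>)
    also have "\<dots> = 0"
      using ib by (intro gen_fps_linear_relation assms) (auto simp: n_def)
    finally show "[:-beta_root j, 1:] dvd (\<Sum>t\<le>?q. e t * cmat r k $$ (i, b - t))"
      by (simp add: poly_eq_0_iff_dvd)
  qed
qed

lemma Pk_beta_root_nonzero: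
  assumes "k \<ge> 1"
  shows "poly (Pk r k 1 [:0, 1:] 0) (beta_root (r + k)) \<noteq> 0"
proof -
  define j m where "j = r + k" and "m = 2 * r + k - 1"
  define A B where "A = [:1, aj j:] ^ k" and "B = [:1, bj j:] ^ m"
  have j: "j \<ge> 1" using assms by (simp add: j_def)
  have "j - r = k" "r - j = 0" "r + j - 1 = m" by (simp_all add: j_def m_def)
  then have "fps_of_poly A * gen_fps r j = fps_of_poly B"
    using gen_fps_times_power[of j r] by (simp add: A_def B_def)
  moreover have "B \<noteq> 0" by (simp add: B_def)
  moreover have "coprime A B"
    using coprime_linear_poly[of 1 "bj j" "aj j" 1] aj_neq_bj[OF j] by (simp add: A_def B_def)
  moreover have "degree A \<le> k"
    unfolding A_def by (rule degree_linear_poly_power_le)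
  moreover have "degree B = m"
    using bj_nonzero[OF j] by (simp add: B_def degree_power_eq)
  ultimately have "det (mat k k (\<lambda>(i, b). fps_nth_int (gen_fps r j) (int m + int b - int i))) \<noteq> 0"
    using det_toeplitz_rational_fps_nonzero[of A "gen_fps r j" B k] by simp
  moreover have "map_mat (\<lambda>p. poly p (beta_root j)) (cmat r k)
      = mat k k (\<lambda>(i, b). fps_nth_int (gen_fps r j) (int m + int b - int i))"
    using assms by (intro eq_matI) (auto simp: cmat_def m_def poly_cseq_beta_root[OF j] of_nat_diff algebra_simps)
  ultimately show ?thesis
    by (simp add: Pk_eq_det_cmat poly_det j_def)
qed

text \<open>The truncated difference \<open>j - r\<close> is \<open>0\<close> for \<open>j \<le> r\<close>, giving those roots multiplicity \<open>k\<close>.\<close>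

definition beta_root_product :: "nat \<Rightarrow> nat \<Rightarrow> rat poly" where
  "beta_root_product r k = (\<Prod>j = 1..r + k - 1. [:-beta_root j, 1:] ^ (k - (j - r)))"

lemma beta_root_product_dvd_Pk: "beta_root_product r k dvd Pk r k 1 [:0, 1:] 0"
  unfolding beta_root_product_def
proof (rule prod_dvd_if_pairwise_coprime)
  fix x y assume "x \<in> {1..r + k - 1}" "y \<in> {1..r + k - 1}" "x \<noteq> y"
  then have "- beta_root x \<noteq> - beta_root y" using beta_root_inj by auto
  then show "coprime ([:-beta_root x, 1:] ^ (k - (x - r))) ([:-beta_root y, 1:] ^ (k - (y - r)))"
    using coprime_linear_poly[of "- beta_root x" 1 1 "- beta_root y"] by simp
qed (auto intro: linear_factor_power_dvd_Pk)

lemma beta_root_product_eq: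
  assumes "k \<ge> 1"
  shows "beta_root_product r k =
    (\<Prod>i = 1..r. [: - 1 / (of_nat (2 * i - 1)) ^ 2, 1 :] ^ k) *
    (\<Prod>i = 1..k - 1. [: - 1 / (of_nat (2 * r + 2 * i - 1)) ^ 2, 1 :] ^ (k - i))"
proof -
  have "{1..r + k - 1} = {1..r} \<union> {r + 1..r + (k - 1)}" using assms by auto
  then have "beta_root_product r k = (\<Prod>j = 1..r. [:-beta_root j, 1:] ^ (k - (j - r)))
      * (\<Prod>j = r + 1..r + (k - 1). [:-beta_root j, 1:] ^ (k - (j - r)))"
    unfolding beta_root_product_def by (simp add: prod.union_disjoint)
  also have "(\<Prod>j = 1..r. [:-beta_root j, 1:] ^ (k - (j - r)))
      = (\<Prod>i = 1..r. [: - 1 / (of_nat (2 * i - 1)) ^ 2, 1 :] ^ k)"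
    by (rule prod.cong) (auto simp: beta_root_def)
  also have "(\<Prod>j = r + 1..r + (k - 1). [:-beta_root j, 1:] ^ (k - (j - r)))
      = (\<Prod>i = 1..k - 1. [: - 1 / (of_nat (2 * r + 2 * i - 1)) ^ 2, 1 :] ^ (k - i))"
    by (rule prod.reindex_bij_witness[of _ "\<lambda>i. r + i" "\<lambda>j. j - r"]) (auto simp: beta_root_def)
  finally show ?thesis .
qed

lemma degree_beta_root_product:
  assumes "k \<ge> 1"
  shows "2 * degree (beta_root_product r k) = k * (k + 2 * r - 1)"
proof -
  have "degree (beta_root_product r k) = r * k + (\<Sum>i = 1..k - 1. k - i)"
    unfolding beta_root_product_eq[OF assms]
    by (simp add: degree_mult_eq degree_prod_sum_eq degree_power_eq prod_zero_iff)
  moreover have "(\<Sum>i = 1..k - 1. k - i) = (\<Sum>i = 1..k - 1. i)"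
    by (rule sum.reindex_bij_witness[of _ "\<lambda>i. k - i" "\<lambda>i. k - i"]) auto
  moreover have "2 * (\<Sum>i = 1..k - 1. i) = (k - 1) * k"
    using double_gauss_sum_from_Suc_0[where 'a = nat, of "k - 1"] assms by simp
  moreover have "k + 2 * r - 1 = (k - 1) + 2 * r" using assms by simp
  ultimately show ?thesis by (simp add: algebra_simps)
qed

theorem proposition4p5:
  fixes r k :: nat
  assumes "r \<ge> 1" and "k \<ge> 1"
  shows "\<exists>c::rat. c \<noteq> 0 \<and>
    Pk r k 1 [:0, 1:] 0 =
      smult c ((\<Prod>i = 1..r. [: - 1 / (of_nat (2*i - 1))^2, 1 :] ^ k) *
               (\<Prod>i = 1..k - 1. [: - 1 / (of_nat (2*r + 2*i - 1))^2, 1 :] ^ (k - i)))"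
proof -
  have "Pk r k 1 [:0, 1:] 0 \<noteq> 0"
    using Pk_beta_root_nonzero[OF assms(2), of r] by auto
  moreover have "degree (Pk r k 1 [:0, 1:] 0) \<le> degree (beta_root_product r k)"
    using degree_Pk_le[of r k] degree_beta_root_product[OF assms(2), of r] by linarith
  ultimately obtain c where "c \<noteq> 0" and "Pk r k 1 [:0, 1:] 0 = smult c (beta_root_product r k)"
    using smult_eq_if_dvd_and_degree_le[OF beta_root_product_dvd_Pk] by blast
  then show ?thesis
    unfolding beta_root_product_eq[OF assms(2)] by blast
qed

end
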